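(* Let $G$ be a graph on $n$ vertices. Then $\mathcal{Z}^{\mathrm{TE}}_-(G)\cong K_n$ if and only if $\mathrm{Z}_-(G)=1$ and every singleton subset of $V(G)$ is a skew forcing set of $G$.
   Context: Skew forcing: vertices are colored blue or white; if any vertex $u$ (blue or white) has exactly one white neighbor $v$, then $u$ may force $v$ to become blue. A skew forcing set is a (possibly empty) set of initially blue vertices from which repeated application of this rule turns every vertex blue; $\mathrm{Z}_-(G)$ is the minimum size of a skew forcing set. $\mathcal{Z}^{\mathrm{TE}}_-(G)$ has as vertices the minimum skew forcing sets of $G$, with $S_1S_2$ an edge iff $S_1\setminus S_2=\{v_1\}$ and $S_2\setminus S_1=\{v_2\}$ for some vertices $v_1,v_2$. *)

theory Defs
  imports Main
begin

definition simple_graph :: "'a set \<Rightarrow> ('a \<Rightarrow> 'a \<Rightarrow> bool) \<Rightarrow> bool" where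
  "simple_graph V E \<longleftrightarrow> finite V \<and> (\<forall>u v. E u v \<longrightarrow> E v u)
     \<and> (\<forall>u. \<not> E u u) \<and> (\<forall>u v. E u v \<longrightarrow> u \<in> V \<and> v \<in> V)"

definition skew_force_step :: "'a set \<Rightarrow> ('a \<Rightarrow> 'a \<Rightarrow> bool) \<Rightarrow> 'a set \<Rightarrow> 'a set \<Rightarrow> bool" where
  "skew_force_step V E B B' \<longleftrightarrow>
     (\<exists>u\<in>V. \<exists>v. {w \<in> V. E u w \<and> w \<notin> B} = {v} \<and> B' = insert v B)"

definition skew_forcing_set :: "'a set \<Rightarrow> ('a \<Rightarrow> 'a \<Rightarrow> bool) \<Rightarrow> 'a set \<Rightarrow> bool" where
  "skew_forcing_set V E S \<longleftrightarrow> S \<subseteq> V \<and> (skew_force_step V E)\<^sup>*\<^sup>* S V"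

definition skew_zero_forcing_number :: "'a set \<Rightarrow> ('a \<Rightarrow> 'a \<Rightarrow> bool) \<Rightarrow> nat" where
  "skew_zero_forcing_number V E = (LEAST k. \<exists>S. skew_forcing_set V E S \<and> card S = k)"

definition min_skew_forcing_sets :: "'a set \<Rightarrow> ('a \<Rightarrow> 'a \<Rightarrow> bool) \<Rightarrow> 'a set set" where
  "min_skew_forcing_sets V E =
     {S. skew_forcing_set V E S \<and> card S = skew_zero_forcing_number V E}"

text \<open>The token exchange skew forcing graph: vertices are minimum skew forcing sets.\<close>
definition TE_adj :: "'a set \<Rightarrow> 'a set \<Rightarrow> bool" where
  "TE_adj S1 S2 \<longleftrightarrow> (\<exists>v1 v2. S1 - S2 = {v1} \<and> S2 - S1 = {v2})"

definition complete_adj :: "nat \<Rightarrow> nat \<Rightarrow> bool" where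
  "complete_adj i j \<longleftrightarrow> i \<noteq> j"

definition graph_iso :: "'a set \<Rightarrow> ('a \<Rightarrow> 'a \<Rightarrow> bool) \<Rightarrow> 'b set \<Rightarrow> ('b \<Rightarrow> 'b \<Rightarrow> bool) \<Rightarrow> bool" where
  "graph_iso V1 E1 V2 E2 \<longleftrightarrow>
     (\<exists>f. bij_betw f V1 V2 \<and> (\<forall>x\<in>V1. \<forall>y\<in>V1. E1 x y \<longleftrightarrow> E2 (f x) (f y)))"

end

theory Submission
  imports Defs
begin

text \<open>Two k-sets are adjacent in the token exchange graph iff they share k - 1 elements.
  A pairwise adjacent family of k-subsets of an n-set therefore either has a common
  (k - 1)-element core or lies inside a single (k + 1)-set, so it has at most
  max (n + 1 - k) (k + 1) members. If G has an edge uv, then u forces v and v forces u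
  starting from V - {u, v}, so Z(G) \<le> n - 2, and n pairwise adjacent minimum skew forcing
  sets force Z(G) = 1 (Z(G) = 0 would leave the empty set as the only one); if G has no edges, V is its only skew forcing set. Once Z(G) = 1,
  the token exchange graph is complete on n vertices exactly when all singletons are
  skew forcing sets.\<close>

lemma graph_iso_complete_iff:
  "graph_iso V E {0..<n} complete_adj \<longleftrightarrow>
     finite V \<and> card V = n \<and> (\<forall>x\<in>V. \<forall>y\<in>V. E x y \<longleftrightarrow> x \<noteq> y)"
proof
  assume "graph_iso V E {0..<n} complete_adj"
  then obtain f where f: "bij_betw f V {0..<n}" "\<forall>x\<in>V. \<forall>y\<in>V. E x y \<longleftrightarrow> f x \<noteq> f y"
    unfolding graph_iso_def complete_adj_def by blast
  have "f x = f y \<longleftrightarrow> x = y" if "x \<in> V" "y \<in> V" for x y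
    using f(1) that unfolding bij_betw_def inj_on_def by blast
  moreover have "finite V" "card V = n"
    using bij_betw_finite[OF f(1)] bij_betw_same_card[OF f(1)] by simp_all
  ultimately show "finite V \<and> card V = n \<and> (\<forall>x\<in>V. \<forall>y\<in>V. E x y \<longleftrightarrow> x \<noteq> y)"
    using f(2) by blast
next
  assume V: "finite V \<and> card V = n \<and> (\<forall>x\<in>V. \<forall>y\<in>V. E x y \<longleftrightarrow> x \<noteq> y)"
  then obtain g where g: "bij_betw g {0..<n} V" using ex_bij_betw_nat_finite by blast
  have "bij_betw (inv_into {0..<n} g) V {0..<n}"
    using g by (rule bij_betw_inv_into)
  moreover from this have "inv_into {0..<n} g x \<noteq> inv_into {0..<n} g y \<longleftrightarrow> x \<noteq> y"
    if "x \<in> V" "y \<in> V" for x y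
    using that unfolding bij_betw_def inj_on_def by blast
  ultimately show "graph_iso V E {0..<n} complete_adj"
    unfolding graph_iso_def complete_adj_def using V by blast
qed

lemma TE_adj_singleton_iff: "TE_adj {a} {b} \<longleftrightarrow> a \<noteq> b"
  unfolding TE_adj_def by auto

lemma TE_adj_card:
  assumes "finite A" "TE_adj A B"
  shows "card A = card (A \<inter> B) + 1" "card (A \<union> B) = card A + 1"
proof -
  obtain a b where ab: "A - B = {a}" "B - A = {b}" using assms(2) unfolding TE_adj_def by blast
  have "A = insert a (A \<inter> B)" "a \<notin> A \<inter> B" using ab by blast+
  then show "card A = card (A \<inter> B) + 1"
    using assms(1) by (metis card_insert_disjoint finite_Int Suc_eq_plus1)
  have "A \<union> B = insert b A" "b \<notin> A" using ab by blast+
  then show "card (A \<union> B) = card A + 1" using assms(1) by simp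
qed

lemma TE_adj_family_core_or_hull:
  assumes card_F: "\<And>C. C \<in> F \<Longrightarrow> finite C \<and> card C = k"
    and adj_F: "\<And>C C'. C \<in> F \<Longrightarrow> C' \<in> F \<Longrightarrow> C \<noteq> C' \<Longrightarrow> TE_adj C C'"
    and AB: "A \<in> F" "B \<in> F" "A \<noteq> B"
  shows "(\<forall>C\<in>F. A \<inter> B \<subseteq> C) \<or> (\<forall>C\<in>F. C \<subseteq> A \<union> B)"
proof -
  define D where "D = A \<inter> B"
  define U where "U = A \<union> B"
  have fin_D: "finite D" using card_F[OF AB(1)] unfolding D_def by blast
  have card_D: "card D + 1 = k"
    using card_F[OF AB(1)] TE_adj_card(1)[OF _ adj_F[OF AB]] unfolding D_def by simp
  have outside: "C = insert y D" if C: "C \<in> F" "y \<in> C" "y \<notin> U" for C y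
  proof -
    have "C \<noteq> A" "C \<noteq> B" using C unfolding U_def by auto
    then obtain a b where "C - A = {a}" "C - B = {b}"
      using adj_F C(1) AB unfolding TE_adj_def by metis
    moreover have "y \<in> C - A" "y \<in> C - B" using C unfolding U_def by auto
    ultimately have "C - A = {y}" "C - B = {y}" by auto
    then have "C \<subseteq> insert y D" unfolding D_def by blast
    moreover have "y \<notin> D" using C(3) unfolding U_def D_def by blast
    then have "card (insert y D) = card C"
      using card_F[OF C(1)] fin_D card_D by simp
    ultimately show ?thesis using fin_D by (simp add: card_subset_eq)
  qed
  show ?thesis
  proof (cases "\<forall>C\<in>F. C \<subseteq> U")
    case False
    then obtain C0 y0 where C0: "C0 \<in> F" "y0 \<in> C0" "y0 \<notin> U" by blast
    have "D \<subseteq> C" if C: "C \<in> F" for C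
    proof (cases "C \<subseteq> U")
      case True
      then have "C \<noteq> C0" using C0 by auto
      then have "card (C \<inter> C0) = card D"
        using TE_adj_card(1)[OF _ adj_F[OF C C0(1)]] card_F[OF C] card_D by simp
      moreover have "C \<inter> C0 \<subseteq> D" using True outside[OF C0] C0(3) by blast
      ultimately have "C \<inter> C0 = D" using fin_D by (simp add: card_subset_eq)
      then show ?thesis by blast
    next
      case False
      then show ?thesis using outside C by blast
    qed
    then show ?thesis unfolding D_def by blast
  qed (simp add: U_def)
qed

lemma card_TE_adj_family_le:
  assumes "finite V"
    and sub_F: "\<And>C. C \<in> F \<Longrightarrow> C \<subseteq> V \<and> card C = k"
    and adj_F: "\<And>C C'. C \<in> F \<Longrightarrow> C' \<in> F \<Longrightarrow> C \<noteq> C' \<Longrightarrow> TE_adj C C'"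
  shows "card F \<le> max (card V + 1 - k) (k + 1)"
proof (cases "card F \<le> 1")
  case False
  have card_F: "finite C \<and> card C = k" if "C \<in> F" for C
    using sub_F[OF that] \<open>finite V\<close> finite_subset by blast
  from False obtain A B where AB: "A \<in> F" "B \<in> F" "A \<noteq> B"
    by (metis card_le_Suc0_iff_eq One_nat_def card.infinite le0)
  have card_Int: "card (A \<inter> B) + 1 = k" and card_Un: "card (A \<union> B) = k + 1"
    using TE_adj_card[OF _ adj_F[OF AB]] card_F[OF AB(1)] by auto
  from TE_adj_family_core_or_hull[OF card_F adj_F AB] show ?thesis
  proof
    assume core: "\<forall>C\<in>F. A \<inter> B \<subseteq> C"
    have "F \<subseteq> (\<lambda>x. insert x (A \<inter> B)) ` (V - A \<inter> B)"
    proof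
      fix C assume C: "C \<in> F"
      have "A \<inter> B \<subseteq> C" using core C by blast
      then have "card (C - A \<inter> B) = 1"
        using card_F[OF C] card_Int by (simp add: card_Diff_subset finite_subset)
      then obtain x where "C - A \<inter> B = {x}" using card_1_singletonE by blast
      then show "C \<in> (\<lambda>x. insert x (A \<inter> B)) ` (V - A \<inter> B)"
        using core C sub_F[OF C] by blast
    qed
    then have "card F \<le> card (V - A \<inter> B)"
      using \<open>finite V\<close> by (simp add: surj_card_le)
    also have "\<dots> = card V + 1 - k"
    proof -
      have "A \<inter> B \<subseteq> V" using sub_F[OF AB(1)] by blast
      then show ?thesis
        using card_Int card_Diff_subset[OF finite_subset[OF _ \<open>finite V\<close>]] by fastforce
    qed
    finally show ?thesis by simp
  next
    assume hull: "\<forall>C\<in>F. C \<subseteq> A \<union> B"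
    have "F \<subseteq> (\<lambda>x. A \<union> B - {x}) ` (A \<union> B)"
    proof
      fix C assume C: "C \<in> F"
      have "card (A \<union> B - C) = 1"
        using hull C card_F[OF C] card_Un card_F[OF AB(1)] card_F[OF AB(2)]
        by (simp add: card_Diff_subset)
      then obtain x where "A \<union> B - C = {x}" using card_1_singletonE by blast
      then show "C \<in> (\<lambda>x. A \<union> B - {x}) ` (A \<union> B)" using hull C by blast
    qed
    then have "card F \<le> card (A \<union> B)"
      using card_F[OF AB(1)] card_F[OF AB(2)] by (simp add: surj_card_le)
    then show ?thesis using card_Un by simp
  qed
qed (simp add: le_max_iff_disj)

lemma skew_forcing_set_self: "skew_forcing_set V E V"
  unfolding skew_forcing_set_def by simp

lemma skew_zero_forcing_number_attained:
  "\<exists>S. skew_forcing_set V E S \<and> card S = skew_zero_forcing_number V E"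
proof -
  have "\<exists>k S. skew_forcing_set V E S \<and> card S = k" using skew_forcing_set_self by blast
  then show ?thesis unfolding skew_zero_forcing_number_def by (rule LeastI_ex)
qed

lemma skew_zero_forcing_number_le:
  "skew_forcing_set V E S \<Longrightarrow> skew_zero_forcing_number V E \<le> card S"
  unfolding skew_zero_forcing_number_def by (rule Least_le) blast

lemma min_skew_forcing_setsD:
  "S \<in> min_skew_forcing_sets V E \<Longrightarrow> S \<subseteq> V \<and> card S = skew_zero_forcing_number V E"
  unfolding min_skew_forcing_sets_def skew_forcing_set_def by blast

lemma skew_forcing_set_Diff_edge:
  assumes G: "simple_graph V E" and uv: "E u v"
  shows "skew_forcing_set V E (V - {u, v})"
proof -
  have nbrs: "u \<in> V" "v \<in> V" "u \<noteq> v" "E v u" "\<not> E u u" "\<not> E v v"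
    using G uv unfolding simple_graph_def by metis+
  have "{w \<in> V. E u w \<and> w \<notin> V - {u, v}} = {v}" "V - {u} = insert v (V - {u, v})"
    using nbrs uv by auto
  then have u_forces_v: "skew_force_step V E (V - {u, v}) (V - {u})"
    unfolding skew_force_step_def using nbrs(1) by blast
  have "{w \<in> V. E v w \<and> w \<notin> V - {u}} = {u}" "V = insert u (V - {u})"
    using nbrs by auto
  then have v_forces_u: "skew_force_step V E (V - {u}) V"
    unfolding skew_force_step_def using nbrs(2) by blast
  have "(skew_force_step V E)\<^sup>*\<^sup>* (V - {u}) V"
    using v_forces_u by (rule r_into_rtranclp)
  then show ?thesis
    unfolding skew_forcing_set_def using u_forces_v by (blast intro: converse_rtranclp_into_rtranclp)
qed

lemma skew_forcing_set_edgeless: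
  assumes "\<forall>u v. \<not> E u v" and "skew_forcing_set V E S"
  shows "S = V"
proof -
  have no_step: "\<not> skew_force_step V E B B'" for B B'
    using assms(1) unfolding skew_force_step_def by auto
  have "(skew_force_step V E)\<^sup>*\<^sup>* S V" using assms(2) unfolding skew_forcing_set_def by auto
  then show ?thesis by (cases rule: converse_rtranclpE) (use no_step in auto)
qed

lemma singleton_if_card_1_subset:
  assumes "S \<subseteq> V" "card S = 1"
  shows "S \<in> (\<lambda>v. {v}) ` V"
proof -
  obtain v where "S = {v}" using assms(2) by (rule card_1_singletonE)
  then show ?thesis using assms(1) by blast
qed

lemma min_skew_forcing_sets_eq_singletons_iff:
  "min_skew_forcing_sets V E = (\<lambda>v. {v}) ` V \<longleftrightarrow>
     skew_zero_forcing_number V E = 1 \<and> (\<forall>v\<in>V. skew_forcing_set V E {v})"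
proof
  assume F: "min_skew_forcing_sets V E = (\<lambda>v. {v}) ` V"
  obtain S where "S \<in> min_skew_forcing_sets V E"
    using skew_zero_forcing_number_attained unfolding min_skew_forcing_sets_def by blast
  then obtain v where "{v} \<in> min_skew_forcing_sets V E" unfolding F by blast
  then have "skew_zero_forcing_number V E = 1"
    unfolding min_skew_forcing_sets_def by simp
  moreover have "skew_forcing_set V E {v}" if "v \<in> V" for v
  proof -
    have "{v} \<in> min_skew_forcing_sets V E" unfolding F using that by blast
    then show ?thesis unfolding min_skew_forcing_sets_def by simp
  qed
  ultimately show "skew_zero_forcing_number V E = 1 \<and> (\<forall>v\<in>V. skew_forcing_set V E {v})"
    by blast
next
  assume Z: "skew_zero_forcing_number V E = 1 \<and> (\<forall>v\<in>V. skew_forcing_set V E {v})"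
  show "min_skew_forcing_sets V E = (\<lambda>v. {v}) ` V"
  proof
    show "min_skew_forcing_sets V E \<subseteq> (\<lambda>v. {v}) ` V"
      using Z by (auto dest!: min_skew_forcing_setsD intro: singleton_if_card_1_subset)
    show "(\<lambda>v. {v}) ` V \<subseteq> min_skew_forcing_sets V E"
      using Z unfolding min_skew_forcing_sets_def by auto
  qed
qed

lemma finite_min_skew_forcing_sets: "finite V \<Longrightarrow> finite (min_skew_forcing_sets V E)"
  by (rule finite_subset[of _ "Pow V"]) (auto dest: min_skew_forcing_setsD)

lemma min_skew_forcing_sets_edgeless:
  assumes "\<forall>u v. \<not> E u v"
  shows "min_skew_forcing_sets V E = {V}"
proof -
  have forcing_iff: "skew_forcing_set V E S \<longleftrightarrow> S = V" for S
    using skew_forcing_set_edgeless[OF assms] skew_forcing_set_self[of V E] by blast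
  obtain S where "skew_forcing_set V E S" "card S = skew_zero_forcing_number V E"
    using skew_zero_forcing_number_attained by blast
  then have "skew_zero_forcing_number V E = card V" unfolding forcing_iff by simp
  then show ?thesis unfolding min_skew_forcing_sets_def forcing_iff by auto
qed

lemma skew_zero_forcing_number_add_2_le:
  assumes G: "simple_graph V E" and uv: "E u v"
  shows "skew_zero_forcing_number V E + 2 \<le> card V"
proof -
  have "finite V" "u \<in> V" "v \<in> V" "u \<noteq> v" using G uv unfolding simple_graph_def by metis+
  then have "{u, v} \<subseteq> V" "card {u, v} = 2" by auto
  then have two_le: "2 \<le> card V" using card_mono[OF \<open>finite V\<close>] by metis
  have "skew_zero_forcing_number V E \<le> card (V - {u, v})"
    using skew_zero_forcing_number_le[OF skew_forcing_set_Diff_edge[OF G uv]] .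
  also have "\<dots> = card V - 2"
    using \<open>{u, v} \<subseteq> V\<close> \<open>card {u, v} = 2\<close> \<open>finite V\<close> by (simp add: card_Diff_subset)
  finally show ?thesis using two_le by linarith
qed

lemma skew_zero_forcing_number_eq_1_if_TE_complete:
  assumes G: "simple_graph V E"
    and card_F: "card (min_skew_forcing_sets V E) = card V"
    and adj_F: "\<And>S S'. S \<in> min_skew_forcing_sets V E \<Longrightarrow> S' \<in> min_skew_forcing_sets V E \<Longrightarrow>
                  S \<noteq> S' \<Longrightarrow> TE_adj S S'"
  shows "skew_zero_forcing_number V E = 1"
proof (cases "\<exists>u v. E u v")
  case False
  then have "min_skew_forcing_sets V E = {V}" by (simp add: min_skew_forcing_sets_edgeless)
  then show ?thesis
    using card_F min_skew_forcing_setsD[of V V E] by simp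
next
  case True
  then obtain u v where uv: "E u v" by blast
  have "finite V" using G unfolding simple_graph_def by blast
  have Z_le: "skew_zero_forcing_number V E + 2 \<le> card V"
    using skew_zero_forcing_number_add_2_le[OF G uv] .
  have "skew_zero_forcing_number V E \<noteq> 0"
  proof
    assume "skew_zero_forcing_number V E = 0"
    then have "min_skew_forcing_sets V E \<subseteq> {{}}"
      using \<open>finite V\<close> by (auto dest!: min_skew_forcing_setsD simp: finite_subset)
    then have "card (min_skew_forcing_sets V E) \<le> 1"
      using card_mono[of "{{}}" "min_skew_forcing_sets V E"] by simp
    then show False using card_F Z_le by simp
  qed
  moreover have "card V \<le> max (card V + 1 - skew_zero_forcing_number V E)
                                (skew_zero_forcing_number V E + 1)"
    using card_TE_adj_family_le[where F = "min_skew_forcing_sets V E",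
        OF \<open>finite V\<close> min_skew_forcing_setsD adj_F] card_F by simp
  ultimately show ?thesis using Z_le by linarith
qed

theorem proposition5p12:
  fixes V :: "'a set" and E :: "'a \<Rightarrow> 'a \<Rightarrow> bool" and n :: nat
  assumes "simple_graph V E" and "card V = n"
  shows "graph_iso (min_skew_forcing_sets V E) TE_adj {0..<n} complete_adj \<longleftrightarrow>
         (skew_zero_forcing_number V E = 1 \<and> (\<forall>v\<in>V. skew_forcing_set V E {v}))"
proof -
  let ?F = "min_skew_forcing_sets V E" and ?singletons = "(\<lambda>v. {v}) ` V"
  have "finite V" using assms(1) unfolding simple_graph_def by blast
  have "graph_iso ?F TE_adj {0..<n} complete_adj \<longleftrightarrow>
        card ?F = card V \<and> (\<forall>S\<in>?F. \<forall>S'\<in>?F. TE_adj S S' \<longleftrightarrow> S \<noteq> S')"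
    unfolding graph_iso_complete_iff
    using finite_min_skew_forcing_sets[OF \<open>finite V\<close>] assms(2) by simp
  also have "\<dots> \<longleftrightarrow> ?F = ?singletons"
  proof
    assume complete: "card ?F = card V \<and> (\<forall>S\<in>?F. \<forall>S'\<in>?F. TE_adj S S' \<longleftrightarrow> S \<noteq> S')"
    then have "skew_zero_forcing_number V E = 1"
      using skew_zero_forcing_number_eq_1_if_TE_complete[OF assms(1)] by blast
    then have "?F \<subseteq> ?singletons"
      by (auto dest!: min_skew_forcing_setsD intro: singleton_if_card_1_subset)
    moreover have "card ?singletons = card ?F" using complete by (simp add: card_image)
    ultimately show "?F = ?singletons" using \<open>finite V\<close> by (simp add: card_subset_eq)
  qed (auto simp: card_image TE_adj_singleton_iff)
  also have "\<dots> \<longleftrightarrow> skew_zero_forcing_number V E = 1 \<and> (\<forall>v\<in>V. skew_forcing_set V E {v})"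
    by (rule min_skew_forcing_sets_eq_singletons_iff)
  finally show ?thesis .
qed

end
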